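(* Let $H_1$ and $H_2$ be simple, undirected, connected graphs of girth at least $6$ on the same vertex set $V$. Suppose that $H_1^2 = H_2^2$ and that $u,v,w \in V$ are three vertices such that $uvw$ is a path in both $H_1$ and $H_2$ (i.e. $uv$ and $vw$ are edges of both $H_1$ and $H_2$, with $u,v,w$ distinct). Then $H_1 = H_2$, i.e. $H_1$ and $H_2$ have exactly the same edge set.
   Context: For a simple, undirected, connected graph $H$, its square $H^2$ is the graph on the same vertex set in which two distinct vertices are adjacent if and only if their distance in $H$ is at most $2$. The girth of a graph is the length of its shortest cycle ($\infty$ for a tree). *)

theory Defs
  imports Main
begin

definition simple_graph :: "'a set \<Rightarrow> ('a \<Rightarrow> 'a \<Rightarrow> bool) \<Rightarrow> bool" where
  "simple_graph V E \<longleftrightarrow> finite V \<and>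
     (\<forall>x y. E x y \<longrightarrow> x \<in> V \<and> y \<in> V) \<and>
     (\<forall>x y. E x y \<longrightarrow> E y x) \<and> (\<forall>x. \<not> E x x)"

definition is_walk :: "'a set \<Rightarrow> ('a \<Rightarrow> 'a \<Rightarrow> bool) \<Rightarrow> 'a list \<Rightarrow> bool" where
  "is_walk V E p \<longleftrightarrow> p \<noteq> [] \<and> set p \<subseteq> V \<and>
     (\<forall>i. Suc i < length p \<longrightarrow> E (p ! i) (p ! Suc i))"

definition connected_graph :: "'a set \<Rightarrow> ('a \<Rightarrow> 'a \<Rightarrow> bool) \<Rightarrow> bool" where
  "connected_graph V E \<longleftrightarrow>
     (\<forall>x\<in>V. \<forall>y\<in>V. \<exists>p. is_walk V E p \<and> hd p = x \<and> last p = y)"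

definition is_cycle :: "'a set \<Rightarrow> ('a \<Rightarrow> 'a \<Rightarrow> bool) \<Rightarrow> 'a list \<Rightarrow> bool" where
  "is_cycle V E c \<longleftrightarrow> length c \<ge> 3 \<and> distinct c \<and> is_walk V E c \<and> E (last c) (hd c)"

definition girth_ge :: "'a set \<Rightarrow> ('a \<Rightarrow> 'a \<Rightarrow> bool) \<Rightarrow> nat \<Rightarrow> bool" where
  "girth_ge V E k \<longleftrightarrow> (\<forall>c. is_cycle V E c \<longrightarrow> length c \<ge> k)"

definition dist_le :: "'a set \<Rightarrow> ('a \<Rightarrow> 'a \<Rightarrow> bool) \<Rightarrow> 'a \<Rightarrow> 'a \<Rightarrow> nat \<Rightarrow> bool" where
  "dist_le V E x y k \<longleftrightarrow> (\<exists>p. is_walk V E p \<and> hd p = x \<and> last p = y \<and> length p \<le> Suc k)"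

definition square :: "'a set \<Rightarrow> ('a \<Rightarrow> 'a \<Rightarrow> bool) \<Rightarrow> 'a \<Rightarrow> 'a \<Rightarrow> bool" where
  "square V E x y \<longleftrightarrow> x \<in> V \<and> y \<in> V \<and> x \<noteq> y \<and> dist_le V E x y 2"

end

theory Submission
  imports Defs
begin

text \<open>
  In a graph of girth at least 6, a vertex within distance 2 of both ends of an edge is adjacent
  to one of them, as otherwise the two connecting paths close a 5-cycle. Applied to the common
  square of \<open>H\<^sub>1\<close> and \<open>H\<^sub>2\<close>, this shows that every \<open>H\<^sub>1\<close>-edge at a vertex of a path
  \<open>abc\<close> shared by both graphs is also an \<open>H\<^sub>2\<close>-edge, and hence lies on a new shared path of
  length 2. Starting from \<open>uvw\<close> and following walks in the connected graph \<open>H\<^sub>1\<close>, every edge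
  of \<open>H\<^sub>1\<close> is an edge of \<open>H\<^sub>2\<close>; by symmetry the graphs coincide.
\<close>

lemma simple_graphD:
  assumes "simple_graph V E" "E x y"
  shows "x \<in> V" "y \<in> V" "E y x" "x \<noteq> y"
  using assms by (auto simp: simple_graph_def)

lemma is_walk_singleton [simp]: "is_walk V E [x] \<longleftrightarrow> x \<in> V"
  by (simp add: is_walk_def)

lemma is_walk_Cons_Cons [simp]:
  "is_walk V E (x # y # ys) \<longleftrightarrow> x \<in> V \<and> E x y \<and> is_walk V E (y # ys)"
  by (auto simp: is_walk_def less_Suc_eq_0_disj)

lemma dist_le_2_iff:
  assumes "simple_graph V E"
  shows "dist_le V E x y 2 \<longleftrightarrow> (x \<in> V \<and> x = y) \<or> E x y \<or> (\<exists>z. E x z \<and> E z y)"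
proof
  assume "dist_le V E x y 2"
  then obtain p where p: "is_walk V E p" "hd p = x" "last p = y" "length p \<le> 3"
    by (auto simp: dist_le_def numeral_eq_Suc)
  then consider a where "p = [a]" | a b where "p = [a, b]" | a b c where "p = [a, b, c]"
    by (auto simp: is_walk_def le_Suc_eq length_Suc_conv numeral_eq_Suc)
  then show "(x \<in> V \<and> x = y) \<or> E x y \<or> (\<exists>z. E x z \<and> E z y)"
    by cases (use p in auto)
next
  assume "(x \<in> V \<and> x = y) \<or> E x y \<or> (\<exists>z. E x z \<and> E z y)"
  then consider "x \<in> V" "x = y" | "E x y" | z where "E x z" "E z y" by blast
  then show "dist_le V E x y 2"
  proof cases
    case 1
    then show ?thesis unfolding dist_le_def by (intro exI[of _ "[x]"]) simp
  next
    case 2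
    then show ?thesis unfolding dist_le_def using simple_graphD[OF assms]
      by (intro exI[of _ "[x, y]"]) simp
  next
    case 3
    then show ?thesis unfolding dist_le_def using simple_graphD[OF assms]
      by (intro exI[of _ "[x, z, y]"]) simp
  qed
qed

lemma square_iff:
  assumes "simple_graph V E"
  shows "square V E x y \<longleftrightarrow> x \<noteq> y \<and> (E x y \<or> (\<exists>z. E x z \<and> E z y))"
  using simple_graphD[OF assms] by (auto simp: square_def dist_le_2_iff[OF assms])

lemma girth_geD: "girth_ge V E k \<Longrightarrow> is_cycle V E c \<Longrightarrow> k \<le> length c"
  by (simp add: girth_ge_def)

lemma girth_ge_6_no_triangle:
  assumes G: "simple_graph V E" and "girth_ge V E 6" and "E a b" "E b c" "E c a"
  shows False
  using girth_geD[OF assms(2), of "[a, b, c]"] assms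
    simple_graphD[OF G \<open>E a b\<close>] simple_graphD[OF G \<open>E b c\<close>] simple_graphD[OF G \<open>E c a\<close>]
  by (auto simp: is_cycle_def)

lemma girth_ge_6_no_4_cycle:
  assumes G: "simple_graph V E" and "girth_ge V E 6" and "E a b" "E b c" "E c d" "E d a"
    and "distinct [a, b, c, d]"
  shows False
  using girth_geD[OF assms(2), of "[a, b, c, d]"] assms
    simple_graphD[OF G \<open>E a b\<close>] simple_graphD[OF G \<open>E c d\<close>]
  by (auto simp: is_cycle_def)

lemma girth_ge_6_no_5_cycle:
  assumes G: "simple_graph V E" and "girth_ge V E 6" and "E a b" "E b c" "E c d" "E d e" "E e a"
    and "distinct [a, b, c, d, e]"
  shows False
  using girth_geD[OF assms(2), of "[a, b, c, d, e]"] assms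
    simple_graphD[OF G \<open>E a b\<close>] simple_graphD[OF G \<open>E c d\<close>] simple_graphD[OF G \<open>E e a\<close>]
  by (auto simp: is_cycle_def)

lemma square_both_ends_adjacent:
  assumes G: "simple_graph V E" and girth: "girth_ge V E 6"
    and bc: "E b c" and "square V E d b" "square V E d c"
  shows "E d b \<or> E d c"
proof (rule ccontr)
  assume no_edge: "\<not> (E d b \<or> E d c)"
  with assms obtain e f where de: "E d e" "E e b" and df: "E d f" "E f c" and "d \<noteq> b" "d \<noteq> c"
    unfolding square_iff[OF G] by blast
  have "e \<noteq> f"
    using girth_ge_6_no_triangle[OF G girth \<open>E e b\<close> bc] df simple_graphD[OF G] by blast
  moreover have "e \<noteq> c" "f \<noteq> b" "b \<noteq> c"
    using no_edge de df simple_graphD(4)[OF G bc] by auto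
  ultimately show False
    using girth_ge_6_no_5_cycle[OF G girth de bc simple_graphD(3)[OF G \<open>E f c\<close>]
        simple_graphD(3)[OF G \<open>E d f\<close>]] \<open>d \<noteq> b\<close> \<open>d \<noteq> c\<close> de df
      simple_graphD(4)[OF G] by auto
qed

lemma path3_ends_not_square:
  assumes G: "simple_graph V E" and girth: "girth_ge V E 6"
    and ab: "E a b" and bc: "E b c" and cd: "E c d" and "a \<noteq> c" "b \<noteq> d"
  shows "\<not> square V E a d"
proof
  assume "square V E a d"
  then have "a \<noteq> d" and "E a d \<or> (\<exists>z. E a z \<and> E z d)"
    unfolding square_iff[OF G] by auto
  moreover have "distinct [a, b, c, d]"
    using \<open>a \<noteq> d\<close> \<open>a \<noteq> c\<close> \<open>b \<noteq> d\<close> ab bc cd simple_graphD(4)[OF G] by auto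
  ultimately consider "E d a" | z where "E a z" "E z d" "distinct [a, b, c, d]"
    using simple_graphD(3)[OF G] by blast
  then show False
  proof cases
    case 1
    then show False using girth_ge_6_no_4_cycle[OF G girth ab bc cd] \<open>distinct [a, b, c, d]\<close> by blast
  next
    case 2
    moreover have "z \<noteq> b" "z \<noteq> c"
      using 2 girth_ge_6_no_triangle[OF G girth ab bc] girth_ge_6_no_triangle[OF G girth bc cd]
        simple_graphD(3)[OF G] by auto
    ultimately show False
      using girth_ge_6_no_5_cycle[OF G girth ab bc cd simple_graphD(3)[OF G \<open>E z d\<close>]
          simple_graphD(3)[OF G \<open>E a z\<close>]] simple_graphD(4)[OF G] by auto
  qed
qed

lemma is_walk_last_invariant:
  assumes "is_walk V E p" "P (hd p)" "\<And>x y. P x \<Longrightarrow> E x y \<Longrightarrow> P y"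
  shows "P (last p)"
  using assms(1,2)
proof (induction p rule: induct_list012)
  case (3 x y zs)
  then show ?case using assms(3)[of x y] by simp
qed (simp_all add: is_walk_def)

lemma connected_graph_invariant:
  assumes "connected_graph V E" "u \<in> V" "x \<in> V" "P u" "\<And>x y. P x \<Longrightarrow> E x y \<Longrightarrow> P y"
  shows "P x"
proof -
  obtain p where "is_walk V E p" "hd p = u" "last p = x"
    using assms(1-3) unfolding connected_graph_def by blast
  then show ?thesis using is_walk_last_invariant[of V E p P] assms(4,5) by simp
qed

locale girth_6_common_square =
  fixes V :: "'a set" and E1 E2 :: "'a \<Rightarrow> 'a \<Rightarrow> bool"
  assumes simple1: "simple_graph V E1" and simple2: "simple_graph V E2"
    and girth1: "girth_ge V E1 6" and girth2: "girth_ge V E2 6"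
    and same_square: "square V E1 = square V E2"
begin

definition common_path2 :: "'a \<Rightarrow> 'a \<Rightarrow> 'a \<Rightarrow> bool" where
  "common_path2 a b c \<longleftrightarrow> a \<noteq> c \<and> E1 a b \<and> E2 a b \<and> E1 b c \<and> E2 b c"

text \<open>Middle vertices are needed: stepping from an end \<open>c\<close> back to the middle \<open>b\<close> yields no
  new shared path ending at \<open>b\<close>.\<close>
definition on_common_path2 :: "'a \<Rightarrow> bool" where
  "on_common_path2 x \<longleftrightarrow> (\<exists>a b c. common_path2 a b c \<and> x \<in> {a, b, c})"

lemma common_path2_rev: "common_path2 a b c \<Longrightarrow> common_path2 c b a"
  using simple_graphD(3)[OF simple1] simple_graphD(3)[OF simple2]
  by (auto simp: common_path2_def)

lemma square_transfer: "square V E1 x y \<longleftrightarrow> square V E2 x y"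
  using same_square by simp

lemma common_path2_extend_end:
  assumes abc: "common_path2 a b c" and cd: "E1 c d" and "d \<noteq> b"
  shows "E2 c d"
proof -
  have ab: "E1 a b" "E2 a b" "a \<noteq> c" and bc: "E1 b c" "E2 b c"
    using abc by (auto simp: common_path2_def)
  have "\<not> square V E2 a d"
    using path3_ends_not_square[OF simple1 girth1 ab(1) bc(1) cd ab(3)] \<open>d \<noteq> b\<close>
    by (simp add: square_transfer)
  moreover have "a \<noteq> d"
    using girth_ge_6_no_triangle[OF simple1 girth1 ab(1) bc(1)] cd by blast
  ultimately have "\<not> E2 d b"
    using ab(2) simple_graphD[OF simple2] by (auto simp: square_iff[OF simple2])
  moreover have "square V E2 d b" "square V E2 d c"
    using simple_graphD(3)[OF simple1 cd] simple_graphD(3)[OF simple1 bc(1)] \<open>d \<noteq> b\<close>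
      simple_graphD(4)[OF simple1 cd]
    by (auto simp: square_iff[OF simple1] simp flip: square_transfer)
  ultimately show "E2 c d"
    using square_both_ends_adjacent[OF simple2 girth2 bc(2)] simple_graphD(3)[OF simple2] by blast
qed

lemma common_path2_extend_middle:
  assumes abc: "common_path2 a b c" and bd: "E1 b d"
  shows "E2 b d"
proof (cases "d = a \<or> d = c")
  case True
  then show ?thesis using abc simple_graphD(3)[OF simple2] by (auto simp: common_path2_def)
next
  case False
  have ab: "E1 a b" "E2 a b" and bc: "E1 b c" "E2 b c" and "a \<noteq> c"
    using abc by (auto simp: common_path2_def)
  have "square V E2 d a" "square V E2 d b" "square V E2 d c"
    using False simple_graphD(3)[OF simple1 ab(1)] bc(1) simple_graphD(3,4)[OF simple1 bd]
    by (auto simp: square_iff[OF simple1] simp flip: square_transfer)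
  then have "E2 d a \<or> E2 d b" "E2 d b \<or> E2 d c"
    using square_both_ends_adjacent[OF simple2 girth2] ab(2) bc(2) by blast+
  moreover have "distinct [d, a, b, c]"
    using False \<open>a \<noteq> c\<close> ab bc bd simple_graphD(4)[OF simple1] simple_graphD(4)[OF simple2] by auto
  ultimately show "E2 b d"
    using girth_ge_6_no_4_cycle[OF simple2 girth2 _ ab(2) bc(2)] simple_graphD(3)[OF simple2]
    by blast
qed

lemma on_common_path2_step:
  assumes "on_common_path2 x" "E1 x y"
  shows "E2 x y \<and> on_common_path2 y"
proof -
  obtain a b c where abc: "common_path2 a b c" and "x = b \<or> x = c"
    using assms(1) common_path2_rev unfolding on_common_path2_def by blast
  then consider "x = b" | "x = c" "y = b" | "x = c" "y \<noteq> b" by blast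
  then show ?thesis
  proof cases
    case 1
    then have "E2 x y" using common_path2_extend_middle[OF abc] assms(2) by simp
    moreover have "common_path2 a b y" if "y \<noteq> a"
      using abc \<open>E2 x y\<close> assms(2) 1 that by (simp add: common_path2_def)
    ultimately show ?thesis using abc unfolding on_common_path2_def by blast
  next
    case 2
    then show ?thesis
      using abc common_path2_rev[OF abc] unfolding on_common_path2_def common_path2_def by blast
  next
    case 3
    then have "E2 x y" using common_path2_extend_end[OF abc] assms(2) by simp
    then have "common_path2 b c y"
      using abc assms(2) 3 by (simp add: common_path2_def)
    then show ?thesis using \<open>E2 x y\<close> unfolding on_common_path2_def by blast
  qed
qed

lemma edge_subset:
  assumes "connected_graph V E1" "common_path2 u v w" "E1 x y"
  shows "E2 x y"
proof -
  have "u \<in> V" "x \<in> V"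
    using assms(2,3) simple_graphD[OF simple1] by (auto simp: common_path2_def)
  moreover have "on_common_path2 u"
    using assms(2) unfolding on_common_path2_def by blast
  ultimately have "on_common_path2 x"
    using connected_graph_invariant[OF assms(1)] on_common_path2_step by blast
  then show ?thesis using on_common_path2_step assms(3) by blast
qed

end


theorem lemma1:
  fixes V :: "'a set" and E1 E2 :: "'a \<Rightarrow> 'a \<Rightarrow> bool" and u v w :: 'a
  assumes "simple_graph V E1" and "simple_graph V E2"
    and "connected_graph V E1" and "connected_graph V E2"
    and "girth_ge V E1 6" and "girth_ge V E2 6"
    and "square V E1 = square V E2"
    and "u \<noteq> v" and "v \<noteq> w" and "u \<noteq> w"
    and "E1 u v" and "E1 v w" and "E2 u v" and "E2 v w"
  shows "E1 = E2"
proof -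
  interpret G12: girth_6_common_square V E1 E2
    using assms by unfold_locales
  interpret G21: girth_6_common_square V E2 E1
    using assms by unfold_locales simp_all
  have "G12.common_path2 u v w" "G21.common_path2 u v w"
    using assms by (simp_all add: G12.common_path2_def G21.common_path2_def)
  then show ?thesis
    using G12.edge_subset G21.edge_subset assms(3,4) by (intro ext iffI) blast+
qed

end
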